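(* Let $n$ be odd and squarefree, with every prime divisor of $n$ at least $7$ and $\Omega(n)\neq 2$. Let $p'$ be a prime divisor of $n$ and $A=L(n;p')$. Then $D_A(n)=\Omega(n)+1$.
   Context: $\mathbb{Z}_n$ is the integers mod $n$, $U(n)$ its unit group. For nonempty $A\subseteq\mathbb{Z}_n\setminus\{0\}$, a sequence $(x_1,\ldots,x_k)$ is an $A$-weighted zero-sum sequence if $\sum a_ix_i=0$ for some $a_i\in A$; $D_A(n)$ is the least $k$ such that every length-$k$ sequence in $\mathbb{Z}_n$ has a nonempty $A$-weighted zero-sum subsequence. $\Omega(n)$ is the number of prime factors with multiplicity. For odd $n=\prod p_i^{r_i}$, a prime $p\mid n$ and $a\in U(n)$, $\left(\frac{a}{p}\right)$ is the Legendre symbol of the image of $a$ in $\mathbb{Z}_p$ and $\left(\frac{a}{n}\right)=\prod\left(\frac{a}{p_i}\right)^{r_i}$ is the Jacobi symbol. For a prime divisor $p'$ of $n$, $L(n;p')=\{a\in U(n): \left(\frac{a}{n}\right)=\left(\frac{a}{p'}\right)\}$. *)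

theory Defs
  imports "HOL-Number_Theory.Number_Theory" "HOL-Computational_Algebra.Squarefree"
begin

text \<open>Elements of Z_n are represented by integers in {0..<n}; equality in Z_n is congruence mod n.\<close>

definition Zn :: "nat \<Rightarrow> int set" where
  "Zn n = {0..<int n}"

definition units_mod :: "nat \<Rightarrow> int set" where
  "units_mod n = {a \<in> Zn n. coprime a (int n)}"

definition bigOmega :: "nat \<Rightarrow> nat" where
  "bigOmega n = size (prime_factorization n)"

definition Jacobi :: "int \<Rightarrow> nat \<Rightarrow> int" where
  "Jacobi a n = (\<Prod>p\<in>prime_factors n. Legendre a (int p) ^ multiplicity p n)"

definition Lset :: "nat \<Rightarrow> nat \<Rightarrow> int set" where
  "Lset n p' = {a \<in> units_mod n. Jacobi a n = Legendre a (int p')}"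

definition has_A_zero_sum_subseq :: "nat \<Rightarrow> int set \<Rightarrow> nat \<Rightarrow> (nat \<Rightarrow> int) \<Rightarrow> bool" where
  "has_A_zero_sum_subseq n A k x \<longleftrightarrow>
     (\<exists>I a. I \<subseteq> {..<k} \<and> I \<noteq> {} \<and> (\<forall>i\<in>I. a i \<in> A) \<and>
            [(\<Sum>i\<in>I. a i * x i) = 0] (mod int n))"

definition DA :: "int set \<Rightarrow> nat \<Rightarrow> nat" where
  "DA A n = (LEAST k. \<forall>x. (\<forall>i<k. x i \<in> Zn n) \<longrightarrow> has_A_zero_sum_subseq n A k x)"

end

theory Submission
  imports Defs
begin

text \<open>
  Lower bound: in the sequence of cofactors \<open>n div p\<close>, \<open>p\<close> running over the prime factors of \<open>n\<close>,
  the prime belonging to any chosen term divides every other term but not that one (the weights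
  are units and \<open>n\<close> is squarefree), so no nonempty weighted subsum vanishes.

  Upper bound: a unit \<open>a\<close> lies in \<open>L(n;p')\<close> iff the Legendre symbols \<open>(a/q)\<close>, \<open>q \<noteq> p'\<close>, multiply
  to \<open>1\<close>. By the Chinese remainder theorem it suffices to find a nonempty index set \<open>I\<close> and signs
  \<open>e p i\<close> with \<open>\<Prod>q\<noteq>p'. e q i = 1\<close> such that, for every \<open>p\<close>, the congruence
  \<open>\<Sum>i\<in>I. w i * x i \<equiv> 0 (mod p)\<close> has a solution with \<open>(w i/p) = e p i\<close>. A Jacobi sum shows that
  for \<open>p \<ge> 7\<close> every pair of signs occurs as \<open>((u/p), ((1-u)/p))\<close>; hence such a solution exists
  for all signs unless exactly one term is nonzero mod \<open>p\<close> (hopeless) or exactly two are (then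
  the product of their signs is forced). A counting argument on the \<open>\<Omega>(n) + 1\<close> terms gives an
  \<open>I\<close> avoiding the first case; the sign conditions then form a linear system over \<open>{-1, 1}\<close>
  whose only obstruction is that all primes \<open>q \<noteq> p'\<close> see the same two terms with forced signs
  of the wrong total product, and for \<open>\<Omega>(n) \<noteq> 2\<close> the choice of \<open>I\<close> can avoid that as well.
\<close>

section \<open>Legendre symbols\<close>

lemma Legendre_cong:
  assumes "[a = b] (mod p)"
  shows "Legendre a p = Legendre b p"
proof -
  have "[a = 0] (mod p) \<longleftrightarrow> [b = 0] (mod p)" "QuadRes p a \<longleftrightarrow> QuadRes p b"
    using assms cong_sym cong_trans unfolding QuadRes_def by blast+
  then show ?thesis
    unfolding Legendre_def by simp
qed

lemma Legendre_mod [simp]: "Legendre (a mod p) p = Legendre a p"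
  by (rule Legendre_cong) (simp add: cong_def)

lemma Legendre_values: "Legendre a p \<in> {-1, 0, 1}"
  by (simp add: Legendre_def)

lemma Legendre_eq_0_iff: "Legendre a p = 0 \<longleftrightarrow> p dvd a"
  by (auto simp: Legendre_def cong_0_iff)

lemma Legendre_in_pm1: "\<not> p dvd a \<Longrightarrow> Legendre a p \<in> {-1, 1}"
  by (auto simp: Legendre_def cong_0_iff)

lemma Legendre_one [simp]: "1 < p \<Longrightarrow> Legendre 1 p = 1"
  unfolding Legendre_def QuadRes_def by (auto simp: cong_def intro!: exI[of _ 1])

lemma Legendre_mult:
  assumes "prime p" "2 < p"
  shows "Legendre (a * b) (int p) = Legendre a (int p) * Legendre b (int p)"
proof -
  let ?h = "(p - 1) div 2"
  define d where "d = Legendre (a * b) (int p) - Legendre a (int p) * Legendre b (int p)"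
  have "[Legendre (a * b) (int p) = a ^ ?h * b ^ ?h] (mod int p)"
    using euler_criterion[OF assms, of "a * b"] by (simp add: power_mult_distrib)
  moreover have "[Legendre a (int p) * Legendre b (int p) = a ^ ?h * b ^ ?h] (mod int p)"
    using euler_criterion[OF assms, of a] euler_criterion[OF assms, of b] by (rule cong_mult)
  ultimately have "int p dvd d"
    unfolding d_def cong_iff_dvd_diff[symmetric] using cong_sym cong_trans by blast
  moreover have "\<bar>d\<bar> < int p"
    using Legendre_values[of "a * b" "int p"] Legendre_values[of a "int p"]
      Legendre_values[of b "int p"] assms(2) unfolding d_def by auto
  ultimately have "d = 0"
    using dvd_imp_le_int by force
  then show ?thesis
    by (simp add: d_def)
qed

lemma Legendre_mult_square:
  assumes "prime p" "2 < p" "\<not> int p dvd a"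
  shows "Legendre (a * a * b) (int p) = Legendre b (int p)"
  using Legendre_in_pm1[OF assms(3)] by (auto simp: Legendre_mult[OF assms(1,2)])

lemma Legendre_inverse:
  assumes "prime p" "2 < p" "[a * b = 1] (mod int p)"
  shows "Legendre a (int p) = Legendre b (int p)"
proof -
  have "Legendre a (int p) * Legendre b (int p) = 1"
    using Legendre_cong[OF assms(3)] assms by (simp add: Legendre_mult)
  then show ?thesis
    using Legendre_values[of a "int p"] Legendre_values[of b "int p"] by auto
qed

lemma exists_Legendre_eq_minus_one:
  assumes "prime p" "2 < p"
  obtains g where "Legendre g (int p) = -1"
proof -
  obtain g where g: "residue_primroot p g"
    using prime_primitive_root_exists assms(1) prime_gt_1_nat by blast
  then have ord: "ord p g = p - 1" and "coprime p g"
    using assms(1) by (auto simp: residue_primroot_def totient_prime)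
  have "Legendre (int g) (int p) \<noteq> 1"
  proof
    assume "Legendre (int g) (int p) = 1"
    then have "[int (g ^ ((p - 1) div 2)) = int 1] (mod int p)"
      using euler_criterion[OF assms, of "int g"] cong_sym by simp
    then have "[g ^ ((p - 1) div 2) = 1] (mod p)"
      using cong_int_iff by blast
    then have "p - 1 dvd (p - 1) div 2"
      using ord ord_divides by metis
    then show False
      using assms(2) by (auto dest: dvd_imp_le)
  qed
  moreover have "\<not> p dvd g"
    using \<open>coprime p g\<close> assms(1) coprime_absorb_left not_prime_unit by blast
  ultimately show ?thesis
    using that Legendre_in_pm1[of "int p" "int g"] by auto
qed

lemma exists_Legendre_eq:
  assumes "prime p" "2 < p" "e \<in> {-1, 1}"
  shows "\<exists>a. Legendre a (int p) = e"
proof (cases "e = 1")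
  case True
  then show ?thesis
    using Legendre_one[of "int p"] assms(2) by (intro exI[of _ 1]) simp
next
  case False
  then show ?thesis
    using assms(3) exists_Legendre_eq_minus_one[OF assms(1,2)] by auto
qed

section \<open>Character sums\<close>

lemma sum_Legendre_residues:
  assumes "prime p" "2 < p"
  shows "(\<Sum>u\<in>{0..<int p}. Legendre u (int p)) = 0"
proof -
  obtain g where g: "Legendre g (int p) = -1"
    using exists_Legendre_eq_minus_one[OF assms] .
  then have "coprime g (int p)"
    using assms(1) Legendre_eq_0_iff[of g "int p"] prime_imp_coprime[of "int p" g]
    by (auto simp: coprime_commute)
  then have bij: "bij_betw (\<lambda>m. g * m mod int p) {1..<int p} {1..<int p}"
    by (rule bij_betw_int_remainders_mult)
  have "(\<Sum>u\<in>{1..<int p}. Legendre u (int p))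
      = (\<Sum>u\<in>{1..<int p}. Legendre (g * u mod int p) (int p))"
    using sum.reindex_bij_betw[OF bij, of "\<lambda>u. Legendre u (int p)"] by simp
  also have "\<dots> = - (\<Sum>u\<in>{1..<int p}. Legendre u (int p))"
    by (simp add: Legendre_mult[OF assms] g sum_negf)
  finally have "(\<Sum>u\<in>{1..<int p}. Legendre u (int p)) = 0"
    by simp
  moreover have "{0..<int p} = insert 0 {1..<int p}"
    using assms(2) by auto
  ultimately show ?thesis
    by (simp add: Legendre_def)
qed

lemma sum_Legendre_reflect:
  assumes "prime p" "2 < p"
  shows "(\<Sum>u\<in>{0..<int p}. Legendre (c - u) (int p)) = 0"
proof -
  let ?r = "\<lambda>u. (c - u) mod int p"
  have "(\<Sum>u\<in>{0..<int p}. Legendre (c - u) (int p)) = (\<Sum>u\<in>{0..<int p}. Legendre (?r u) (int p))"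
    by simp
  also have "\<dots> = (\<Sum>u\<in>{0..<int p}. Legendre u (int p))"
    by (rule sum.reindex_bij_witness[of _ ?r ?r]) (auto simp: mod_diff_right_eq)
  finally show ?thesis
    using sum_Legendre_residues[OF assms] by simp
qed

lemma modular_inverse_prime:
  assumes "prime p" "u \<in> {1..<int p}"
  shows "modular_inverse (int p) u \<in> {1..<int p}"
    and "modular_inverse (int p) (modular_inverse (int p) u) = u"
    and "[u * modular_inverse (int p) u = 1] (mod int p)"
proof -
  have cop: "coprime u (int p)"
    using assms prime_imp_coprime[of "int p" u] zdvd_not_zless[of u "int p"]
    by (auto simp: coprime_commute)
  then show "[u * modular_inverse (int p) u = 1] (mod int p)"
    by (rule cong_modular_inverse1)
  show "modular_inverse (int p) u \<in> {1..<int p}"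
    using coprime_modular_inverse[OF cop] modular_inverse_int_nonneg[of "int p" u]
      modular_inverse_int_less[of "int p" u] prime_gt_1_nat[OF assms(1)]
    by (cases "modular_inverse (int p) u = 0") auto
  show "modular_inverse (int p) (modular_inverse (int p) u) = u"
    using assms(2) cong_modular_inverse2[OF cop] by (intro modular_inverse_int_eqI) auto
qed

text \<open>For \<open>u \<noteq> 0\<close>, \<open>u (1 - u) \<equiv> u\<^sup>2 (u\<^sup>-\<^sup>1 - 1)\<close>, and inversion permutes the nonzero residues.\<close>

lemma sum_Legendre_mult_one_minus:
  assumes "prime p" "2 < p"
  shows "(\<Sum>u\<in>{0..<int p}. Legendre u (int p) * Legendre (1 - u) (int p)) = - Legendre (-1) (int p)"
proof -
  let ?P = "int p"
  let ?inv = "modular_inverse ?P"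
  have summand: "Legendre u ?P * Legendre (1 - u) ?P = Legendre (?inv u - 1) ?P" if "u \<in> {1..<?P}" for u
  proof -
    have "[u * (u * ?inv u) - u * u = u * 1 - u * u] (mod ?P)"
      using modular_inverse_prime(3)[OF assms(1) that] by (intro cong_diff cong_mult cong_refl)
    then have "[u * (1 - u) = u * u * (?inv u - 1)] (mod ?P)"
      by (simp add: algebra_simps cong_sym_eq)
    then have "Legendre (u * (1 - u)) ?P = Legendre (u * u * (?inv u - 1)) ?P"
      by (rule Legendre_cong)
    also have "\<dots> = Legendre (?inv u - 1) ?P"
      using that zdvd_not_zless[of u ?P] by (intro Legendre_mult_square[OF assms]) auto
    finally show ?thesis
      by (simp add: Legendre_mult[OF assms])
  qed
  have "{0..<?P} = insert 0 {1..<?P}"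
    using assms(2) by auto
  then have "(\<Sum>u\<in>{0..<?P}. Legendre u ?P * Legendre (1 - u) ?P)
      = (\<Sum>u\<in>{1..<?P}. Legendre (?inv u - 1) ?P)"
    using summand Legendre_eq_0_iff[of 0 ?P] by simp
  also have "\<dots> = (\<Sum>v\<in>{1..<?P}. Legendre (v - 1) ?P)"
    by (rule sum.reindex_bij_witness[of _ ?inv ?inv])
      (simp_all add: modular_inverse_prime(1,2)[OF assms(1), simplified])
  also have "\<dots> = (\<Sum>t\<in>{0..<?P - 1}. Legendre t ?P)"
    by (rule sum.reindex_bij_witness[of _ "\<lambda>t. t + 1" "\<lambda>v. v - 1"]) auto
  also have "\<dots> = (\<Sum>t\<in>{0..<?P}. Legendre t ?P) - Legendre (?P - 1) ?P"
  proof -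
    have "{0..<?P} = insert (?P - 1) {0..<?P - 1}"
      using assms(2) by auto
    then show ?thesis
      by simp
  qed
  also have "Legendre (?P - 1) ?P = Legendre (-1) ?P"
    by (rule Legendre_cong) (simp add: cong_def)
  finally show ?thesis
    using sum_Legendre_residues[OF assms] by simp
qed

text \<open>
  The summand \<open>(1 + e1 (u/p)) (1 + e2 ((1-u)/p))\<close> is \<open>4\<close> at a solution and \<open>0\<close> at any other
  \<open>u \<notin> {0, 1}\<close>; by the character sums its total is \<open>p - e1 e2 (-1/p)\<close>, more than the at most
  \<open>4\<close> contributed by \<open>u = 0, 1\<close> once \<open>p \<ge> 7\<close>.
\<close>

lemma exists_Legendre_pair:
  assumes "prime p" "7 \<le> p" "e1 \<in> {-1, 1}" "e2 \<in> {-1, 1}"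
  shows "\<exists>u. Legendre u (int p) = e1 \<and> Legendre (1 - u) (int p) = e2"
proof (rule ccontr)
  assume none: "\<nexists>u. Legendre u (int p) = e1 \<and> Legendre (1 - u) (int p) = e2"
  let ?\<chi> = "\<lambda>u. Legendre u (int p)"
  define f where "f u = (1 + e1 * ?\<chi> u) * (1 + e2 * ?\<chi> (1 - u))" for u
  have p2: "2 < p"
    using assms(2) by simp
  have "f u = 0" if "u \<in> {2..<int p}" for u
  proof -
    have "\<not> int p dvd u" "\<not> int p dvd (1 - u)"
      using that zdvd_not_zless[of u "int p"] zdvd_not_zless[of "u - 1" "int p"] dvd_minus_iff[of "int p" "u - 1"]
      by auto
    then have "?\<chi> u \<in> {-1, 1}" "?\<chi> (1 - u) \<in> {-1, 1}"
      using Legendre_in_pm1 by blast+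
    then show ?thesis
      using none assms(3,4) by (auto simp: f_def)
  qed
  moreover have "{0..<int p} = {0, 1} \<union> {2..<int p}"
    using p2 by auto
  ultimately have "(\<Sum>u\<in>{0..<int p}. f u) = f 0 + f 1"
    by (simp add: sum.union_disjoint)
  also have "\<dots> = 2 + e1 + e2"
    using p2 Legendre_eq_0_iff[of 0 "int p"] by (simp add: f_def)
  finally have "2 + e1 + e2 = int p + e1 * (\<Sum>u\<in>{0..<int p}. ?\<chi> u) + e2 * (\<Sum>u\<in>{0..<int p}. ?\<chi> (1 - u))
      + e1 * e2 * (\<Sum>u\<in>{0..<int p}. ?\<chi> u * ?\<chi> (1 - u))"
    by (simp add: f_def algebra_simps sum.distrib sum_distrib_left)
  then have "2 + e1 + e2 = int p - e1 * e2 * ?\<chi> (-1)"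
    using sum_Legendre_residues[OF assms(1) p2] sum_Legendre_reflect[OF assms(1) p2, of 1]
      sum_Legendre_mult_one_minus[OF assms(1) p2] by simp
  moreover have "?\<chi> (-1) \<in> {-1, 1}"
    using Legendre_in_pm1[of "int p" "-1"] assms(2) by simp
  ultimately show False
    using assms by auto
qed

section \<open>Linear congruences with prescribed Legendre symbols\<close>

lemma coprime_if_not_prime_dvd:
  "prime p \<Longrightarrow> \<not> int p dvd a \<Longrightarrow> coprime a (int p)"
  using prime_imp_coprime[of "int p" a] by (simp add: coprime_commute)

lemma exists_Legendre_two_term:
  assumes "prime p" "7 \<le> p" "\<not> int p dvd c" "\<not> int p dvd y1" "\<not> int p dvd y2"
    and "e1 \<in> {-1, 1}" "e2 \<in> {-1, 1}"
  shows "\<exists>w1 w2. Legendre w1 (int p) = e1 \<and> Legendre w2 (int p) = e2 \<and>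
           [w1 * y1 + w2 * y2 = c] (mod int p)"
proof -
  let ?\<chi> = "\<lambda>a. Legendre a (int p)"
  have p2: "2 < p"
    using assms(2) by simp
  note mult = Legendre_mult[OF assms(1) p2]
  have \<chi>: "?\<chi> c \<in> {-1, 1}" "?\<chi> y1 \<in> {-1, 1}" "?\<chi> y2 \<in> {-1, 1}"
    using Legendre_in_pm1 assms(3-5) by blast+
  obtain u where u: "?\<chi> u = e1 * ?\<chi> c * ?\<chi> y1" "?\<chi> (1 - u) = e2 * ?\<chi> c * ?\<chi> y2"
    using exists_Legendre_pair[OF assms(1,2), of "e1 * ?\<chi> c * ?\<chi> y1" "e2 * ?\<chi> c * ?\<chi> y2"]
      \<chi> assms(6,7) by auto
  obtain i1 i2 where i: "[y1 * i1 = 1] (mod int p)" "[y2 * i2 = 1] (mod int p)"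
    using cong_solve_coprime_int coprime_if_not_prime_dvd[OF assms(1)] assms(4,5) by metis
  have "?\<chi> i1 = ?\<chi> y1" "?\<chi> i2 = ?\<chi> y2"
    using Legendre_inverse[OF assms(1) p2 i(1)] Legendre_inverse[OF assms(1) p2 i(2)] by simp_all
  then have "?\<chi> (c * u * i1) = e1" "?\<chi> (c * (1 - u) * i2) = e2"
    using \<chi> assms(6,7) by (auto simp: mult u)
  moreover have "[c * u * (y1 * i1) + c * (1 - u) * (y2 * i2) = c * u * 1 + c * (1 - u) * 1] (mod int p)"
    using i by (intro cong_add cong_mult cong_refl)
  then have "[c * u * i1 * y1 + c * (1 - u) * i2 * y2 = c] (mod int p)"
    by (simp add: algebra_simps)
  ultimately show ?thesis
    by blast
qed

lemma exists_Legendre_two_term_zero: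
  assumes "prime p" "2 < p" "\<not> int p dvd y1" "\<not> int p dvd y2" "e1 \<in> {-1, 1}"
    and "e1 * e2 = Legendre (- (y1 * y2)) (int p)"
  shows "\<exists>w1 w2. Legendre w1 (int p) = e1 \<and> Legendre w2 (int p) = e2 \<and>
           [w1 * y1 + w2 * y2 = 0] (mod int p)"
proof -
  let ?\<chi> = "\<lambda>a. Legendre a (int p)"
  note mult = Legendre_mult[OF assms(1,2)]
  obtain r where r: "?\<chi> r = e1"
    using exists_Legendre_eq[OF assms(1,2,5)] by blast
  obtain i where i: "[y2 * i = 1] (mod int p)"
    using cong_solve_coprime_int coprime_if_not_prime_dvd[OF assms(1)] assms(4) by metis
  have "?\<chi> ((- y1) * r * i) = ?\<chi> (- y1) * ?\<chi> y2 * e1"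
    using Legendre_inverse[OF assms(1,2) i] r by (simp only: mult) simp
  also have "?\<chi> (- y1) * ?\<chi> y2 = e1 * e2"
    using assms(6) mult[of "- y1" y2] by simp
  finally have "?\<chi> ((- y1) * r * i) = e2"
    using assms(5) by auto
  moreover have "[r * y1 - r * y1 * (y2 * i) = r * y1 - r * y1 * 1] (mod int p)"
    using i by (intro cong_diff cong_mult cong_refl)
  then have "[r * y1 + ((- y1) * r * i) * y2 = 0] (mod int p)"
    by (simp add: algebra_simps)
  ultimately show ?thesis
    using r by blast
qed

text \<open>
  \<open>r\<close> and \<open>4 r\<close> have the same symbol, and \<open>c - r y3\<close>, \<open>c - 4 r y3\<close> differ by \<open>3 r y3 \<not>\<equiv> 0\<close>, so one
  choice of \<open>w3\<close> leaves a nonzero right-hand side for the two-term case.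
\<close>

lemma exists_Legendre_three_term:
  assumes "prime p" "7 \<le> p" "\<not> int p dvd y1" "\<not> int p dvd y2" "\<not> int p dvd y3"
    and "e1 \<in> {-1, 1}" "e2 \<in> {-1, 1}" "e3 \<in> {-1, 1}"
  shows "\<exists>w1 w2 w3. Legendre w1 (int p) = e1 \<and> Legendre w2 (int p) = e2 \<and>
           Legendre w3 (int p) = e3 \<and> [w1 * y1 + w2 * y2 + w3 * y3 = c] (mod int p)"
proof -
  have p2: "2 < p"
    using assms(2) by simp
  obtain r where r: "Legendre r (int p) = e3"
    using exists_Legendre_eq[OF assms(1) p2 assms(8)] by blast
  define w3 where "w3 = (if int p dvd (c - r * y3) then 4 * r else r)"
  have "\<not> int p dvd 2"
    using assms(2) by (auto dest: zdvd_imp_le)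
  then have w3: "Legendre w3 (int p) = e3"
    using Legendre_mult_square[OF assms(1) p2 _, of 2 r] r by (simp add: w3_def)
  have "\<not> int p dvd (c - w3 * y3)"
  proof
    assume w3_dvd: "int p dvd (c - w3 * y3)"
    then have r_dvd: "int p dvd (c - r * y3)"
      by (auto simp: w3_def split: if_splits)
    then have "int p dvd (c - r * y3) - (c - w3 * y3)"
      using w3_dvd by (rule dvd_diff)
    moreover have "(c - r * y3) - (c - w3 * y3) = 3 * r * y3"
      using r_dvd by (simp add: w3_def algebra_simps)
    ultimately have "int p dvd 3 \<or> int p dvd r \<or> int p dvd y3"
      using assms(1) by (simp add: prime_dvd_mult_iff)
    moreover have "\<not> int p dvd r"
      using r assms(8) Legendre_eq_0_iff[of r "int p"] by auto
    moreover have "\<not> int p dvd 3"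
      using assms(2) by (auto dest: zdvd_imp_le)
    ultimately show False
      using assms(5) by blast
  qed
  then obtain w1 w2 where w12: "Legendre w1 (int p) = e1" "Legendre w2 (int p) = e2"
      "[w1 * y1 + w2 * y2 = c - w3 * y3] (mod int p)"
    using exists_Legendre_two_term[OF assms(1,2) _ assms(3,4,6,7)] by blast
  have "[w1 * y1 + w2 * y2 + w3 * y3 = c - w3 * y3 + w3 * y3] (mod int p)"
    using w12(3) by (rule cong_add) (rule cong_refl)
  then show ?thesis
    using w12(1,2) w3 by (intro exI[of _ w1] exI[of _ w2] exI[of _ w3]) simp
qed

lemma exists_Legendre_weighted_sum:
  assumes "prime p" "7 \<le> p" "3 \<le> card S" "\<forall>i\<in>S. \<not> int p dvd x i" "\<forall>i\<in>S. e i \<in> {-1, 1}"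
  shows "\<exists>w. (\<forall>i\<in>S. Legendre (w i) (int p) = e i) \<and> [(\<Sum>i\<in>S. w i * x i) = c] (mod int p)"
proof -
  obtain u v t R where S: "S = insert u (insert v (insert t R))"
    and new: "u \<notin> insert v (insert t R)" "v \<notin> insert t R" "t \<notin> R" and "finite R"
    using assms(3) unfolding numeral_3_eq_3 card_le_Suc_iff by (auto simp del: insert_iff)
  have "\<forall>i\<in>S. \<exists>a. Legendre a (int p) = e i"
    using exists_Legendre_eq assms(1,2,5) by simp
  then obtain r where r: "\<forall>i\<in>S. Legendre (r i) (int p) = e i"
    by metis
  have nonzero: "\<not> int p dvd x u" "\<not> int p dvd x v" "\<not> int p dvd x t"
    and sign: "e u \<in> {-1, 1}" "e v \<in> {-1, 1}" "e t \<in> {-1, 1}"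
    using assms(4,5) unfolding S by simp_all
  obtain w1 w2 w3 where w: "Legendre w1 (int p) = e u" "Legendre w2 (int p) = e v"
      "Legendre w3 (int p) = e t"
      "[w1 * x u + w2 * x v + w3 * x t = c - (\<Sum>i\<in>R. r i * x i)] (mod int p)"
    using exists_Legendre_three_term[OF assms(1,2) nonzero sign] by blast
  define w where "w = r(u := w1, v := w2, t := w3)"
  have "(\<Sum>i\<in>R. w i * x i) = (\<Sum>i\<in>R. r i * x i)"
    using new by (intro sum.cong) (auto simp: w_def)
  then have "(\<Sum>i\<in>S. w i * x i) = w1 * x u + w2 * x v + w3 * x t + (\<Sum>i\<in>R. r i * x i)"
    using new \<open>finite R\<close> unfolding S by (auto simp: w_def)
  moreover have "[w1 * x u + w2 * x v + w3 * x t + (\<Sum>i\<in>R. r i * x i)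
      = c - (\<Sum>i\<in>R. r i * x i) + (\<Sum>i\<in>R. r i * x i)] (mod int p)"
    using w(4) by (rule cong_add) (rule cong_refl)
  moreover have "\<forall>i\<in>S. Legendre (w i) (int p) = e i"
    using r w(1-3) by (auto simp: w_def S)
  ultimately show ?thesis
    by auto
qed

definition supp_mod :: "nat \<Rightarrow> ('a \<Rightarrow> int) \<Rightarrow> 'a set \<Rightarrow> 'a set" where
  "supp_mod p x I = {i \<in> I. \<not> int p dvd x i}"

lemma sum_cong_supp_mod:
  assumes "finite I"
  shows "[(\<Sum>i\<in>I. w i * x i) = (\<Sum>i\<in>supp_mod p x I. w i * x i)] (mod int p)"
proof -
  have "supp_mod p x I \<subseteq> I"
    by (auto simp: supp_mod_def)
  then have "(\<Sum>i\<in>I. w i * x i)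
      = (\<Sum>i\<in>I - supp_mod p x I. w i * x i) + (\<Sum>i\<in>supp_mod p x I. w i * x i)"
    using assms sum.subset_diff by blast
  moreover have "int p dvd (\<Sum>i\<in>I - supp_mod p x I. w i * x i)"
    by (intro dvd_sum) (auto simp: supp_mod_def)
  ultimately show ?thesis
    by (simp add: cong_iff_dvd_diff)
qed

text \<open>
  A single term nonzero mod \<open>p\<close> can never vanish, and for exactly two such terms
  \<open>w\<^sub>u x\<^sub>u + w\<^sub>v x\<^sub>v \<equiv> 0\<close> forces \<open>(w\<^sub>u w\<^sub>v/p) = (-x\<^sub>u x\<^sub>v/p)\<close>; by \<open>exists_Legendre_zero_sum\<close> these are
  the only constraints on the symbols of the weights.
\<close>

definition sign_compatible :: "nat \<Rightarrow> ('a \<Rightarrow> int) \<Rightarrow> 'a set \<Rightarrow> ('a \<Rightarrow> int) \<Rightarrow> bool" where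
  "sign_compatible p x I e \<longleftrightarrow> (\<forall>i. e i \<in> {-1, 1}) \<and> card (supp_mod p x I) \<noteq> 1 \<and>
     (card (supp_mod p x I) = 2 \<longrightarrow>
        (\<Prod>i\<in>supp_mod p x I. e i) = Legendre (- (\<Prod>i\<in>supp_mod p x I. x i)) (int p))"

lemma exists_Legendre_zero_sum_nonzero:
  assumes "prime p" "7 \<le> p" "finite S" "\<forall>i\<in>S. \<not> int p dvd x i" "\<forall>i\<in>S. e i \<in> {-1, 1}"
    and "card S \<noteq> 1" "card S = 2 \<Longrightarrow> (\<Prod>i\<in>S. e i) = Legendre (- (\<Prod>i\<in>S. x i)) (int p)"
  shows "\<exists>w. (\<forall>i\<in>S. Legendre (w i) (int p) = e i) \<and> [(\<Sum>i\<in>S. w i * x i) = 0] (mod int p)"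
proof -
  consider "card S = 0" | "card S = 2" | "3 \<le> card S"
    using assms(6) by linarith
  then show ?thesis
  proof cases
    case 1
    then show ?thesis
      using assms(3) by simp
  next
    case 2
    then obtain u v where uv: "S = {u, v}" "u \<noteq> v"
      by (meson card_2_iff)
    moreover have "2 < p"
      using assms(2) by simp
    ultimately obtain w1 w2 where "Legendre w1 (int p) = e u" "Legendre w2 (int p) = e v"
        "[w1 * x u + w2 * x v = 0] (mod int p)"
      using exists_Legendre_two_term_zero[OF assms(1), of "x u" "x v" "e u" "e v"]
        assms(4,5) assms(7)[OF 2] by auto
    then show ?thesis
      using uv by (intro exI[of _ "\<lambda>i. if i = u then w1 else w2"]) auto
  next
    case 3
    then show ?thesis
      using exists_Legendre_weighted_sum[OF assms(1,2) 3 assms(4,5)] by blast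
  qed
qed

lemma exists_Legendre_zero_sum:
  assumes "prime p" "7 \<le> p" "finite I" "sign_compatible p x I e"
  shows "\<exists>w. (\<forall>i\<in>I. Legendre (w i) (int p) = e i) \<and> [(\<Sum>i\<in>I. w i * x i) = 0] (mod int p)"
proof -
  let ?S = "supp_mod p x I"
  have e: "\<forall>i. e i \<in> {-1, 1}" and "card ?S \<noteq> 1"
    and "card ?S = 2 \<Longrightarrow> (\<Prod>i\<in>?S. e i) = Legendre (- (\<Prod>i\<in>?S. x i)) (int p)"
    using assms(4) unfolding sign_compatible_def by blast+
  moreover have "finite ?S" "\<forall>i\<in>?S. \<not> int p dvd x i"
    using assms(3) by (auto simp: supp_mod_def)
  ultimately obtain w where w: "\<forall>i\<in>?S. Legendre (w i) (int p) = e i"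
      "[(\<Sum>i\<in>?S. w i * x i) = 0] (mod int p)"
    using exists_Legendre_zero_sum_nonzero[OF assms(1,2), of ?S x e] by blast
  have "\<forall>i\<in>I. \<exists>a. Legendre a (int p) = e i"
    using exists_Legendre_eq[OF assms(1)] assms(2) e by simp
  then obtain r where r: "\<forall>i\<in>I. Legendre (r i) (int p) = e i"
    by metis
  define w' where "w' i = (if i \<in> ?S then w i else r i)" for i
  have "[(\<Sum>i\<in>I. w' i * x i) = (\<Sum>i\<in>?S. w' i * x i)] (mod int p)"
    by (rule sum_cong_supp_mod[OF assms(3)])
  also have "(\<Sum>i\<in>?S. w' i * x i) = (\<Sum>i\<in>?S. w i * x i)"
    by (rule sum.cong) (simp_all add: w'_def)
  finally have "[(\<Sum>i\<in>I. w' i * x i) = 0] (mod int p)"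
    using w(2) cong_trans by blast
  moreover have "\<forall>i\<in>I. Legendre (w' i) (int p) = e i"
    using w(1) r by (simp add: w'_def)
  ultimately show ?thesis
    by blast
qed

section \<open>Sign matrices\<close>

lemma prod_in_pm1: "(\<forall>i\<in>A. f i \<in> {-1, 1::int}) \<Longrightarrow> prod f A \<in> {-1, 1}"
  by (induction A rule: infinite_finite_induct) auto

lemma exists_sign_rows:
  assumes "\<forall>q\<in>Q. \<sigma> q \<in> {-1, 1::int}"
  shows "\<exists>\<beta>. (\<forall>q\<in>Q. \<forall>i. \<beta> q i \<in> {-1, 1}) \<and> (\<forall>q\<in>Q. card (T q) = 2 \<longrightarrow> prod (\<beta> q) (T q) = \<sigma> q)"
proof -
  define \<beta> where "\<beta> q i = (if card (T q) = 2 \<and> i = (SOME j. j \<in> T q) then \<sigma> q else 1)" for q i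
  have "prod (\<beta> q) (T q) = \<sigma> q" if "card (T q) = 2" for q
  proof -
    have "T q \<noteq> {}" "finite (T q)"
      using that card_ge_0_finite[of "T q"] by auto
    then have "(SOME j. j \<in> T q) \<in> T q"
      by (simp add: some_in_eq)
    then show ?thesis
      using prod.delta[OF \<open>finite (T q)\<close>, of "SOME j. j \<in> T q" "\<lambda>_. \<sigma> q"] that
      by (simp add: \<beta>_def eq_commute[of _ "SOME j. j \<in> T q"])
  qed
  then show ?thesis
    using assms by (intro exI[of _ \<beta>]) (auto simp: \<beta>_def)
qed

lemma prod_flip_sign_entry:
  fixes \<beta> :: "'q \<Rightarrow> 'i \<Rightarrow> int"
  assumes "finite Q" "finite C" "q1 \<in> Q" "z \<in> C"
  defines "\<rho> \<equiv> \<lambda>q i. (if q = q1 \<and> i = z then -1 else 1) * \<beta> q i"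
  shows "z \<notin> A \<Longrightarrow> prod (\<rho> q1) A = prod (\<beta> q1) A"
    and "q \<noteq> q1 \<Longrightarrow> \<rho> q = \<beta> q"
    and "(\<Prod>i\<in>C. \<Prod>q\<in>Q. \<rho> q i) = - (\<Prod>i\<in>C. \<Prod>q\<in>Q. \<beta> q i)"
proof -
  show "z \<notin> A \<Longrightarrow> prod (\<rho> q1) A = prod (\<beta> q1) A"
    by (rule prod.cong) (auto simp: \<rho>_def)
  show "q \<noteq> q1 \<Longrightarrow> \<rho> q = \<beta> q"
    by (simp add: \<rho>_def fun_eq_iff)
  have "(\<Prod>q\<in>Q. \<rho> q i) = (if i = z then -1 else 1) * (\<Prod>q\<in>Q. \<beta> q i)" for i
  proof (cases "i = z")
    case True
    then have "(\<Prod>q\<in>Q. \<rho> q i) = (\<Prod>q\<in>Q. if q = q1 then -1 else 1) * (\<Prod>q\<in>Q. \<beta> q i)"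
      by (simp add: \<rho>_def prod.distrib)
    also have "(\<Prod>q\<in>Q. if q = q1 then -1 else 1 :: int) = -1"
      using prod.delta[OF assms(1), of q1 "\<lambda>_. -1"] assms(3) by simp
    finally show ?thesis
      using True by simp
  qed (simp add: \<rho>_def)
  then show "(\<Prod>i\<in>C. \<Prod>q\<in>Q. \<rho> q i) = - (\<Prod>i\<in>C. \<Prod>q\<in>Q. \<beta> q i)"
    using prod.delta[OF assms(2), of z "\<lambda>_. -1 :: int"] assms(4)
    by (simp add: prod.distrib eq_commute[of _ z])
qed

lemma exists_sign_rows_column_product:
  fixes \<sigma> :: "'q \<Rightarrow> int" and T :: "'q \<Rightarrow> 'i set"
  assumes "finite Q" "\<forall>q\<in>Q. \<sigma> q \<in> {-1, 1}" "card C = 2" "s \<in> {-1, 1}"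
    and "\<forall>q\<in>Q. T q = C \<Longrightarrow> prod \<sigma> Q = s"
  shows "\<exists>\<rho>. (\<forall>q\<in>Q. \<forall>i. \<rho> q i \<in> {-1, 1}) \<and> (\<forall>q\<in>Q. card (T q) = 2 \<longrightarrow> prod (\<rho> q) (T q) = \<sigma> q)
           \<and> (\<Prod>i\<in>C. \<Prod>q\<in>Q. \<rho> q i) = s"
proof -
  obtain \<beta> where \<beta>: "\<forall>q\<in>Q. \<forall>i. \<beta> q i \<in> {-1, 1}" "\<forall>q\<in>Q. card (T q) = 2 \<longrightarrow> prod (\<beta> q) (T q) = \<sigma> q"
    using exists_sign_rows[OF assms(2), where T = T] by blast
  have "finite C"
    using assms(3) card_ge_0_finite[of C] by simp
  show ?thesis
  proof (cases "(\<Prod>i\<in>C. \<Prod>q\<in>Q. \<beta> q i) = s")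
    case True
    then show ?thesis
      using \<beta> by blast
  next
    case False
    have "\<exists>q1\<in>Q. \<exists>z\<in>C. \<not> (card (T q1) = 2 \<and> z \<in> T q1)"
    proof (rule ccontr)
      assume "\<not> ?thesis"
      then have TC: "T q = C" if "q \<in> Q" for q
        using that assms(3) card_subset_eq[of "T q" C] by (fastforce intro: card_ge_0_finite)
      have "(\<Prod>i\<in>C. \<Prod>q\<in>Q. \<beta> q i) = (\<Prod>q\<in>Q. \<Prod>i\<in>C. \<beta> q i)"
        by (rule prod.swap)
      also have "\<dots> = prod \<sigma> Q"
        using \<beta>(2) assms(3) TC by (intro prod.cong) auto
      also have "\<dots> = s"
        using assms(5) TC by blast
      finally show False
        using False by simp
    qed
    then obtain q1 z where q1: "q1 \<in> Q" and z: "z \<in> C" and free: "\<not> (card (T q1) = 2 \<and> z \<in> T q1)"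
      by blast
    define \<rho> where "\<rho> q i = (if q = q1 \<and> i = z then -1 else 1) * \<beta> q i" for q i
    note flip = prod_flip_sign_entry[OF assms(1) \<open>finite C\<close> q1 z, where \<beta> = \<beta>, folded \<rho>_def]
    have "\<forall>q\<in>Q. card (T q) = 2 \<longrightarrow> prod (\<rho> q) (T q) = \<sigma> q"
      using \<beta>(2) flip(1,2) free by metis
    moreover have "(\<Prod>i\<in>C. \<Prod>q\<in>Q. \<beta> q i) \<in> {-1, 1}"
      using \<beta>(1) by (intro prod_in_pm1 ballI) auto
    then have "(\<Prod>i\<in>C. \<Prod>q\<in>Q. \<rho> q i) = s"
      using flip(3) False assms(4) by auto
    moreover have "\<forall>q\<in>Q. \<forall>i. \<rho> q i \<in> {-1, 1}"
      using \<beta>(1) by (auto simp: \<rho>_def)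
    ultimately show ?thesis
      by blast
  qed
qed

text \<open>
  Signs \<open>\<epsilon> q i\<close> are sought with prescribed products over the pairs \<open>T q\<close> (rows) and product \<open>1\<close>
  in every column \<open>i\<close>. Multiplying all these equations shows that the system is inconsistent
  when every row constrains the same pair and the prescribed products multiply to \<open>-1\<close>;
  \<open>exists_sign_matrix\<close> shows that this is the only obstruction.
\<close>

definition sign_obstructed :: "'q set \<Rightarrow> ('q \<Rightarrow> 'i set) \<Rightarrow> ('q \<Rightarrow> int) \<Rightarrow> bool" where
  "sign_obstructed Q T \<sigma> \<longleftrightarrow> Q \<noteq> {} \<and> (\<exists>C. card C = 2 \<and> (\<forall>q\<in>Q. T q = C)) \<and> prod \<sigma> Q \<noteq> 1"

lemma exists_sign_matrix:
  fixes \<sigma> :: "'q \<Rightarrow> int" and T :: "'q \<Rightarrow> 'i set"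
  assumes "finite Q" "\<forall>q\<in>Q. \<sigma> q \<in> {-1, 1}" "\<not> sign_obstructed Q T \<sigma>"
  shows "\<exists>\<epsilon>. (\<forall>q\<in>Q. \<forall>i. \<epsilon> q i \<in> {-1, 1}) \<and> (\<forall>q\<in>Q. card (T q) = 2 \<longrightarrow> prod (\<epsilon> q) (T q) = \<sigma> q)
           \<and> (\<forall>i. (\<Prod>q\<in>Q. \<epsilon> q i) = 1)"
proof (cases "\<exists>q0\<in>Q. card (T q0) = 2")
  case False
  then show ?thesis
    by (intro exI[of _ "\<lambda>_ _. 1"]) auto
next
  case True
  then obtain q0 where q0: "q0 \<in> Q" "card (T q0) = 2"
    by blast
  define Q0 where "Q0 = Q - {q0}"
  have Q: "Q = insert q0 Q0" "q0 \<notin> Q0" "finite Q0"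
    using q0 assms(1) by (auto simp: Q0_def)
  have "prod \<sigma> Q0 = \<sigma> q0" if "\<forall>q\<in>Q0. T q = T q0"
  proof -
    have "\<sigma> q0 * prod \<sigma> Q0 = 1"
      using assms(3) q0 that Q unfolding sign_obstructed_def by auto
    then show ?thesis
      using assms(2) q0 by auto
  qed
  moreover have "\<forall>q\<in>Q0. \<sigma> q \<in> {-1, 1}" "\<sigma> q0 \<in> {-1, 1}"
    using assms(2) q0 by (auto simp: Q0_def)
  ultimately obtain \<rho> where \<rho>: "\<forall>q\<in>Q0. \<forall>i. \<rho> q i \<in> {-1, 1}"
      "\<forall>q\<in>Q0. card (T q) = 2 \<longrightarrow> prod (\<rho> q) (T q) = \<sigma> q" "(\<Prod>i\<in>T q0. \<Prod>q\<in>Q0. \<rho> q i) = \<sigma> q0"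
    using exists_sign_rows_column_product[OF Q(3) _ q0(2)] by blast
  \<comment> \<open>Row \<open>q0\<close> is the columnwise product of the others, which makes every column product \<open>1\<close>.\<close>
  define \<epsilon> where "\<epsilon> = \<rho>(q0 := \<lambda>i. \<Prod>q\<in>Q0. \<rho> q i)"
  have column: "(\<Prod>q\<in>Q0. \<rho> q i) \<in> {-1, 1}" for i
    using \<rho>(1) by (intro prod_in_pm1) auto
  have "(\<Prod>q\<in>Q0. \<epsilon> q i) = (\<Prod>q\<in>Q0. \<rho> q i)" for i
    using Q(2) by (intro prod.cong) (auto simp: \<epsilon>_def)
  then have "(\<Prod>q\<in>Q. \<epsilon> q i) = 1" for i
    using Q column[of i] by (auto simp: \<epsilon>_def)
  moreover have "\<forall>q\<in>Q. \<forall>i. \<epsilon> q i \<in> {-1, 1}"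
    using \<rho>(1) column Q(1) by (auto simp: \<epsilon>_def)
  moreover have "\<forall>q\<in>Q. card (T q) = 2 \<longrightarrow> prod (\<epsilon> q) (T q) = \<sigma> q"
    using \<rho>(2,3) q0(2) Q by (auto simp: \<epsilon>_def)
  ultimately show ?thesis
    by blast
qed

section \<open>Choosing the subsequence\<close>

lemma exists_subset_without_singleton_traces:
  fixes Z :: "'j \<Rightarrow> 'e set"
  assumes "finite J" "finite E" "card J < card E"
  shows "\<exists>I\<subseteq>E. I \<noteq> {} \<and> (\<forall>j\<in>J. card (I \<inter> Z j) \<noteq> 1) \<and> card (E - I) \<le> card {j\<in>J. I \<inter> Z j = {}}"
  using assms
proof (induction "card J" arbitrary: J E rule: less_induct)
  case less
  show ?case
  proof (cases "\<exists>j\<in>J. card (E \<inter> Z j) = 1")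
    case False
    moreover have "E \<noteq> {}"
      using less.prems(3) by auto
    ultimately show ?thesis
      by (intro exI[of _ E]) auto
  next
    case True
    then obtain j0 e where j0: "j0 \<in> J" "E \<inter> Z j0 = {e}"
      by (metis card_1_singletonE)
    then have "e \<in> E"
      by blast
    have "0 < card J"
      using j0(1) less.prems(1) card_gt_0_iff by blast
    then have smaller: "card (J - {j0}) < card J" "card (J - {j0}) < card (E - {e})"
      using j0(1) \<open>e \<in> E\<close> less.prems by simp_all
    have "finite (J - {j0})" "finite (E - {e})"
      using less.prems(1,2) by simp_all
    then obtain I where I: "I \<subseteq> E - {e}" "I \<noteq> {}" "\<forall>j\<in>J - {j0}. card (I \<inter> Z j) \<noteq> 1"
        "card (E - {e} - I) \<le> card {j\<in>J - {j0}. I \<inter> Z j = {}}"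
      using less.hyps[OF smaller(1) _ _ smaller(2)] by blast
    have "I \<inter> Z j0 = {}"
      using I(1) j0(2) by blast
    have "E - I = insert e (E - {e} - I)"
      using \<open>e \<in> E\<close> I(1) by blast
    then have "card (E - I) = card (E - {e} - I) + 1"
      using less.prems(2) by simp
    moreover have "{j\<in>J. I \<inter> Z j = {}} = insert j0 {j\<in>J - {j0}. I \<inter> Z j = {}}"
      using \<open>I \<inter> Z j0 = {}\<close> j0(1) by blast
    then have "card {j\<in>J. I \<inter> Z j = {}} = card {j\<in>J - {j0}. I \<inter> Z j = {}} + 1"
      using less.prems(1) by simp
    moreover have "\<forall>j\<in>J. card (I \<inter> Z j) \<noteq> 1"
      using I(3) \<open>I \<inter> Z j0 = {}\<close> by (metis DiffI card.empty singletonD zero_neq_one)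
    ultimately show ?thesis
      using I(1,2,4) by (intro exI[of _ I]) auto
  qed
qed

lemma not_sign_obstructed_if_empty:
  "\<forall>q\<in>Q. T q = {} \<Longrightarrow> \<not> sign_obstructed Q T \<sigma>"
  by (auto simp: sign_obstructed_def)

lemma exists_subset_trace_ne_1:
  assumes "finite D" "D \<noteq> {}" "card (D \<inter> Z) = 1 \<Longrightarrow> 2 \<le> card D"
  shows "\<exists>J\<subseteq>D. J \<noteq> {} \<and> card (J \<inter> Z) \<noteq> 1"
proof (cases "card (D \<inter> Z) = 1")
  case True
  then obtain w where w: "D \<inter> Z = {w}"
    by (metis card_1_singletonE)
  then have "card (D - {w}) = card D - 1"
    by (intro card_Diff_singleton) blast
  then have "card (D - {w}) \<noteq> 0"
    using assms(3)[OF True] by linarith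
  then have "D - {w} \<noteq> {}"
    by (metis card.empty)
  moreover have "(D - {w}) \<inter> Z = {}"
    using w by blast
  ultimately show ?thesis
    by (intro exI[of _ "D - {w}"]) auto
qed (use assms(2) in blast)

lemma exists_subset_with_empty_traces:
  assumes "finite P" "finite E" "card P < card E" "p' \<in> P" "card P \<noteq> 2"
    and "I \<subseteq> E" "card (E - I) \<le> card {p\<in>P. I \<inter> Z p = {}}"
    and "P - {p'} \<noteq> {}" "card C = 2" "\<forall>q\<in>P - {p'}. I \<inter> Z q = C"
  shows "\<exists>J\<subseteq>E. J \<noteq> {} \<and> card (J \<inter> Z p') \<noteq> 1 \<and> (\<forall>q\<in>P - {p'}. J \<inter> Z q = {})"
proof -
  define D where "D = I - C"
  have "C \<subseteq> I" "finite I"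
    using assms(2,6,8,10) finite_subset by blast+
  then have card_D: "card D = card I - 2"
    using assms(9) card_Diff_subset[of C I] finite_subset[of C I] by (simp add: D_def)
  have "0 < card (P - {p'})"
    using assms(1,8) by (simp add: card_gt_0_iff)
  then have "3 \<le> card P"
    using assms(4,5) by (simp add: card_Diff_singleton)
  have "C \<noteq> {}"
    using assms(9) by auto
  then have empty_traces: "{p\<in>P. I \<inter> Z p = {}} \<subseteq> {p'}"
    using assms(10) by auto
  then have "card {p\<in>P. I \<inter> Z p = {}} \<le> 1"
    using card_mono[of "{p'}"] by fastforce
  then have "card (E - I) \<le> 1"
    using assms(7) by linarith
  moreover have "card (E - I) = card E - card I"
    using card_Diff_subset[OF \<open>finite I\<close> assms(6)] .
  ultimately have "card P \<le> card I"
    using assms(3) by linarith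
  have "2 \<le> card D" if "card (D \<inter> Z p') = 1"
  proof -
    have "D \<inter> Z p' \<noteq> {}"
      using that by (metis card.empty zero_neq_one)
    then have "{p\<in>P. I \<inter> Z p = {}} = {}"
      using empty_traces by (auto simp: D_def)
    then have "card (E - I) = 0"
      using assms(7) by (metis card.empty le_zero_eq)
    then have "E - I = {}"
      using assms(2) by simp
    then have "card I = card E"
      using assms(6) by (metis Diff_eq_empty_iff subset_antisym)
    then show ?thesis
      using card_D \<open>3 \<le> card P\<close> assms(3) by linarith
  qed
  moreover have "D \<noteq> {}"
    using card_D \<open>3 \<le> card P\<close> \<open>card P \<le> card I\<close> by auto
  ultimately obtain J where "J \<subseteq> D" "J \<noteq> {}" "card (J \<inter> Z p') \<noteq> 1"
    using exists_subset_trace_ne_1[of D "Z p'"] \<open>finite I\<close> by (auto simp: D_def)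
  moreover have "\<forall>q\<in>P - {p'}. J \<inter> Z q = {}"
    using \<open>J \<subseteq> D\<close> assms(10) by (auto simp: D_def)
  ultimately show ?thesis
    using assms(6) by (intro exI[of _ J]) (auto simp: D_def)
qed

lemma exists_unobstructed_subset:
  fixes Z :: "'p \<Rightarrow> 'e set" and \<sigma> :: "'e set \<Rightarrow> 'p \<Rightarrow> int"
  assumes "finite P" "finite E" "card P < card E" "p' \<in> P" "card P \<noteq> 2"
  shows "\<exists>I\<subseteq>E. I \<noteq> {} \<and> (\<forall>p\<in>P. card (I \<inter> Z p) \<noteq> 1)
           \<and> \<not> sign_obstructed (P - {p'}) (\<lambda>q. I \<inter> Z q) (\<sigma> I)"
proof -
  obtain I where I: "I \<subseteq> E" "I \<noteq> {}" "\<forall>p\<in>P. card (I \<inter> Z p) \<noteq> 1"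
      "card (E - I) \<le> card {p\<in>P. I \<inter> Z p = {}}"
    using exists_subset_without_singleton_traces[OF assms(1-3), where Z = Z] by blast
  show ?thesis
  proof (cases "sign_obstructed (P - {p'}) (\<lambda>q. I \<inter> Z q) (\<sigma> I)")
    case False
    then show ?thesis
      using I by blast
  next
    case True
    then obtain C where C: "P - {p'} \<noteq> {}" "card C = 2" "\<forall>q\<in>P - {p'}. I \<inter> Z q = C"
      unfolding sign_obstructed_def by blast
    obtain J where J: "J \<subseteq> E" "J \<noteq> {}" "card (J \<inter> Z p') \<noteq> 1" "\<forall>q\<in>P - {p'}. J \<inter> Z q = {}"
      using exists_subset_with_empty_traces[OF assms I(1,4) C] by blast
    have "\<forall>p\<in>P. card (J \<inter> Z p) \<noteq> 1"
    proof
      fix p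
      assume "p \<in> P"
      then show "card (J \<inter> Z p) \<noteq> 1"
        using J(3,4) by (cases "p = p'") simp_all
    qed
    moreover have "\<not> sign_obstructed (P - {p'}) (\<lambda>q. J \<inter> Z q) (\<sigma> J)"
      using J(4) by (rule not_sign_obstructed_if_empty)
    ultimately show ?thesis
      using J(1,2) by blast
  qed
qed

text \<open>
  \<open>e p i\<close> is to become the Legendre symbol modulo \<open>p\<close> of the weight of \<open>x i\<close>; the column
  condition is what puts the glued weights into \<open>L(n;p')\<close>.
\<close>

lemma exists_compatible_signs:
  fixes P :: "nat set" and x :: "nat \<Rightarrow> int"
  assumes "finite P" "\<forall>p\<in>P. prime p" "p' \<in> P" "card P \<noteq> 2"
  shows "\<exists>I\<subseteq>{..<card P + 1}. I \<noteq> {} \<and>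
           (\<exists>e. (\<forall>p\<in>P. sign_compatible p x I (e p)) \<and> (\<forall>i. (\<Prod>q\<in>P - {p'}. e q i) = 1))"
proof -
  define Z where "Z p = {i. \<not> int p dvd x i}" for p
  define \<sigma> where "\<sigma> I q = Legendre (- (\<Prod>i\<in>I \<inter> Z q. x i)) (int q)" for I q
  obtain I where I: "I \<subseteq> {..<card P + 1}" "I \<noteq> {}" "\<forall>p\<in>P. card (I \<inter> Z p) \<noteq> 1"
      "\<not> sign_obstructed (P - {p'}) (\<lambda>q. I \<inter> Z q) (\<sigma> I)"
    using exists_unobstructed_subset[OF assms(1) _ _ assms(3,4), of "{..<card P + 1}" Z \<sigma>] by auto
  have supp: "supp_mod p x I = I \<inter> Z p" for p
    by (auto simp: supp_mod_def Z_def)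
  have \<sigma>_pm1: "\<sigma> I q \<in> {-1, 1}" if "q \<in> P" for q
  proof -
    have "\<not> int q dvd (\<Prod>i\<in>I \<inter> Z q. x i)"
      using I(1) assms(2) that by (subst prime_dvd_prod_iff) (auto simp: Z_def intro: finite_subset)
    then show ?thesis
      unfolding \<sigma>_def by (intro Legendre_in_pm1) simp
  qed
  obtain \<epsilon> where \<epsilon>: "\<forall>q\<in>P - {p'}. \<forall>i. \<epsilon> q i \<in> {-1, 1}"
      "\<forall>q\<in>P - {p'}. card (I \<inter> Z q) = 2 \<longrightarrow> prod (\<epsilon> q) (I \<inter> Z q) = \<sigma> I q"
      "\<forall>i. (\<Prod>q\<in>P - {p'}. \<epsilon> q i) = 1"
    using exists_sign_matrix[of "P - {p'}" "\<sigma> I" "\<lambda>q. I \<inter> Z q"] assms(1) \<sigma>_pm1 I(4) by auto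
  obtain \<beta> where \<beta>: "\<forall>i. \<beta> p' i \<in> {-1, 1}" "card (I \<inter> Z p') = 2 \<longrightarrow> prod (\<beta> p') (I \<inter> Z p') = \<sigma> I p'"
    using exists_sign_rows[of "{p'}" "\<sigma> I" "\<lambda>q. I \<inter> Z q"] \<sigma>_pm1 assms(3) by auto
  define e where "e q = (if q = p' then \<beta> p' else \<epsilon> q)" for q
  have "sign_compatible p x I (e p)" if "p \<in> P" for p
    using that I(3) \<epsilon>(1,2) \<beta> unfolding sign_compatible_def supp e_def \<sigma>_def by auto
  moreover have "(\<Prod>q\<in>P - {p'}. e q i) = 1" for i
    using \<epsilon>(3) by (simp add: e_def)
  ultimately show ?thesis
    using I(1,2) by blast
qed

section \<open>Squarefree moduli\<close>

lemma multiplicity_squarefree: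
  assumes "squarefree (n :: nat)" "p \<in> prime_factors n"
  shows "multiplicity p n = 1"
  using assms squarefree_factorial_semiring'[of n] not_squarefree_0 by (cases "n = 0") auto

lemma prod_prime_factors_squarefree:
  assumes "squarefree (n :: nat)"
  shows "\<Prod>(prime_factors n) = n"
proof -
  have "n \<noteq> 0"
    using assms by (cases "n = 0") simp_all
  then have "(\<Prod>p\<in>prime_factors n. p ^ multiplicity p n) = n"
    using prod_prime_factors[of n] by simp
  then show ?thesis
    using multiplicity_squarefree[OF assms] by (metis (no_types, lifting) power_one_right prod.cong)
qed

lemma bigOmega_squarefree:
  assumes "squarefree n"
  shows "bigOmega n = card (prime_factors n)"
proof -
  have "prime_factorization n = mset_set (prime_factors n)"
  proof (rule multiset_eqI)
    fix p
    show "count (prime_factorization n) p = count (mset_set (prime_factors n)) p"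
    proof (cases "p \<in> prime_factors n")
      case True
      then show ?thesis
        using multiplicity_squarefree[OF assms True]
        by (simp add: count_prime_factorization in_prime_factors_imp_prime)
    qed (simp add: count_eq_zero_iff)
  qed
  then show ?thesis
    unfolding bigOmega_def by (metis size_mset_set)
qed

lemma Jacobi_squarefree:
  assumes "squarefree n"
  shows "Jacobi a n = (\<Prod>p\<in>prime_factors n. Legendre a (int p))"
  unfolding Jacobi_def using multiplicity_squarefree[OF assms] by (intro prod.cong) auto

lemma cong_squarefree_if_cong_prime_factors:
  assumes "squarefree n" "\<forall>p\<in>prime_factors n. [a = b] (mod int p)"
  shows "[a = b] (mod int n)"
proof -
  have "\<forall>p\<in>prime_factors n. \<forall>q\<in>prime_factors n. p \<noteq> q \<longrightarrow> coprime (int p) (int q)"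
    by (auto intro: primes_coprime)
  then have "[a = b] (mod (\<Prod>p\<in>prime_factors n. int p))"
    using assms(2) by (rule cong_cong_prod_coprime[rotated])
  then show ?thesis
    using prod_prime_factors_squarefree[OF assms(1)] by (simp add: of_nat_prod[symmetric])
qed

lemma prime_dvd_div_of_distinct_prime:
  assumes "prime p" "prime q" "p \<noteq> q" "p dvd n" "q dvd (n :: nat)"
  shows "p dvd n div q"
proof -
  have "p dvd q * (n div q)"
    using assms(4,5) by simp
  moreover have "\<not> p dvd q"
    using assms(1-3) primes_dvd_imp_eq by blast
  ultimately show ?thesis
    using assms(1) prime_dvd_mult_iff by blast
qed

lemma not_prime_dvd_div_self:
  assumes "squarefree (n :: nat)" "prime p" "p dvd n"
  shows "\<not> p dvd n div p"
proof
  assume "p dvd n div p"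
  then have "p ^ 2 dvd n"
    using assms(3) by (metis dvd_div_iff_mult dvd_mult_div_cancel mult_dvd_mono power2_eq_square
        prime_gt_0_nat assms(2) dvd_refl)
  then have "p dvd 1"
    using squarefreeD[OF assms(1)] by blast
  then show False
    using assms(2) by simp
qed

lemma exists_Zn_cong_prime_factors:
  assumes "squarefree n"
  shows "\<exists>a\<in>Zn n. \<forall>p\<in>prime_factors n. [a = c p] (mod int p)"
proof -
  have "\<forall>p\<in>prime_factors n. \<forall>q\<in>prime_factors n. p \<noteq> q \<longrightarrow> coprime (id p) (id q)"
    using primes_coprime in_prime_factors_imp_prime by (metis id_apply)
  then obtain y where y: "\<forall>p\<in>prime_factors n. [y = nat (c p mod int p)] (mod id p)"
    using chinese_remainder_nat[OF finite_set_mset, of _ id "\<lambda>p. nat (c p mod int p)"] by blast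
  have "n \<noteq> 0"
    using assms by (cases "n = 0") simp_all
  then have "int (y mod n) \<in> Zn n"
    by (simp add: Zn_def)
  moreover have "[int (y mod n) = c p] (mod int p)" if "p \<in> prime_factors n" for p
  proof -
    have "p dvd n" "0 < p"
      using that by (auto simp: in_prime_factors_iff prime_gt_0_nat)
    then have "[int (y mod n) = int y] (mod int p)"
      by (simp add: cong_def mod_mod_cancel flip: of_nat_mod)
    also have "[int y = int (nat (c p mod int p))] (mod int p)"
      unfolding cong_int_iff using y that by simp
    also have "int (nat (c p mod int p)) = c p mod int p"
      using \<open>0 < p\<close> by simp
    also have "[c p mod int p = c p] (mod int p)"
      by (simp add: cong_def)
    finally show ?thesis .
  qed
  ultimately show ?thesis
    by blast
qed

lemma Lset_memberI:
  assumes "squarefree n" "p' \<in> prime_factors n" "a \<in> Zn n"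
    and "\<forall>p\<in>prime_factors n. \<not> int p dvd a"
    and "(\<Prod>q\<in>prime_factors n - {p'}. Legendre a (int q)) = 1"
  shows "a \<in> Lset n p'"
proof -
  have "coprime a (\<Prod>p\<in>prime_factors n. int p)"
    using assms(4) coprime_if_not_prime_dvd by (intro prod_coprime_right) auto
  then have "coprime a (int n)"
    using prod_prime_factors_squarefree[OF assms(1)] by (simp flip: of_nat_prod)
  moreover have "Jacobi a n = Legendre a (int p') * (\<Prod>q\<in>prime_factors n - {p'}. Legendre a (int q))"
    unfolding Jacobi_squarefree[OF assms(1)] by (rule prod.remove[OF finite_set_mset assms(2)])
  ultimately show ?thesis
    using assms(3,5) by (simp add: Lset_def units_mod_def)
qed

section \<open>The Davenport constant of \<open>L(n;p')\<close>\<close>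

lemma DA_eqI:
  assumes "\<forall>x. (\<forall>i<k. x i \<in> Zn n) \<longrightarrow> has_A_zero_sum_subseq n A k x"
    and "\<And>m. m < k \<Longrightarrow> \<exists>x. (\<forall>i<m. x i \<in> Zn n) \<and> \<not> has_A_zero_sum_subseq n A m x"
  shows "DA A n = k"
  unfolding DA_def
proof (rule Least_equality)
  show "\<And>m. \<forall>x. (\<forall>i<m. x i \<in> Zn n) \<longrightarrow> has_A_zero_sum_subseq n A m x \<Longrightarrow> k \<le> m"
    using assms(2) by (meson not_le)
qed (rule assms(1))

lemma not_prime_dvd_sum_cofactors:
  assumes "squarefree n" "finite I" "j \<in> I" "inj_on h I" "\<forall>i\<in>I. h i \<in> prime_factors n"
    and "\<forall>i\<in>I. coprime (a i) (int n)"
  shows "\<not> int (h j) dvd (\<Sum>i\<in>I. a i * int (n div h i))"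
proof
  let ?p = "h j"
  assume p_dvd: "int ?p dvd (\<Sum>i\<in>I. a i * int (n div h i))"
  have p: "prime ?p" "?p dvd n"
    using assms(3,5) by (auto simp: in_prime_factors_iff)
  have "int ?p dvd (\<Sum>i\<in>I - {j}. a i * int (n div h i))"
  proof (intro dvd_sum)
    fix i
    assume i: "i \<in> I - {j}"
    then have "?p \<noteq> h i"
      using inj_onD[OF assms(4), of i j] assms(3) by auto
    moreover have "prime (h i)" "h i dvd n"
      using assms(5) i by (auto simp: in_prime_factors_iff)
    ultimately have "?p dvd n div h i"
      by (intro prime_dvd_div_of_distinct_prime[OF p(1)] p(2))
    then show "int ?p dvd a i * int (n div h i)"
      by simp
  qed
  moreover have "a j * int (n div ?p) = (\<Sum>i\<in>I. a i * int (n div h i)) - (\<Sum>i\<in>I - {j}. a i * int (n div h i))"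
    using sum.remove[OF assms(2,3), of "\<lambda>i. a i * int (n div h i)"] by simp
  ultimately have "int ?p dvd a j * int (n div ?p)"
    using p_dvd by (simp add: dvd_diff)
  then have "int ?p dvd a j \<or> int ?p dvd int (n div ?p)"
    using p(1) by (simp add: prime_dvd_mult_iff)
  moreover have "\<not> int ?p dvd a j"
  proof
    assume "int ?p dvd a j"
    moreover have "int ?p dvd int n"
      using p(2) by simp
    ultimately have "is_unit (int ?p)"
      using assms(3,6) coprime_common_divisor by blast
    then show False
      using p(1) prime_gt_1_nat by fastforce
  qed
  moreover have "\<not> ?p dvd n div ?p"
    using not_prime_dvd_div_self[OF assms(1) p] .
  ultimately show False
    by simp
qed

lemma no_zero_sum_subseq_of_cofactors:
  fixes A :: "int set"
  assumes "squarefree n" "A \<subseteq> units_mod n" "m \<le> bigOmega n"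
  shows "\<exists>x. (\<forall>i<m. x i \<in> Zn n) \<and> \<not> has_A_zero_sum_subseq n A m x"
proof -
  let ?P = "prime_factors n"
  obtain h where h: "bij_betw h {0..<card ?P} ?P"
    using ex_bij_betw_nat_finite by blast
  have m: "{..<m} \<subseteq> {0..<card ?P}"
    using assms(3) bigOmega_squarefree[OF assms(1)] by auto
  then have hP: "\<forall>i\<in>{..<m}. h i \<in> ?P" and h_inj: "inj_on h {..<m}"
    using bij_betwE[OF h] inj_on_subset[OF bij_betw_imp_inj_on[OF h]] by blast+
  define x where "x i = int (n div h i)" for i
  have "x i \<in> Zn n" if "i < m" for i
  proof -
    have "h i \<in> ?P"
      using hP that by simp
    then have "1 < h i" "n \<noteq> 0"
      using prime_gt_1_nat[of "h i"] by (auto simp: in_prime_factors_iff)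
    then show ?thesis
      by (simp add: x_def Zn_def)
  qed
  moreover have "\<not> has_A_zero_sum_subseq n A m x"
  proof
    assume "has_A_zero_sum_subseq n A m x"
    then obtain I a where I: "I \<subseteq> {..<m}" "I \<noteq> {}" "\<forall>i\<in>I. a i \<in> A"
        and sum: "[(\<Sum>i\<in>I. a i * x i) = 0] (mod int n)"
      unfolding has_A_zero_sum_subseq_def by blast
    obtain j where j: "j \<in> I"
      using I(2) by blast
    have "finite I"
      using I(1) by (rule finite_subset) simp
    moreover have "inj_on h I" "\<forall>i\<in>I. h i \<in> ?P" "\<forall>i\<in>I. coprime (a i) (int n)"
      using I(1,3) hP inj_on_subset[OF h_inj] assms(2) by (auto simp: units_mod_def)
    ultimately have "\<not> int (h j) dvd (\<Sum>i\<in>I. a i * x i)"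
      unfolding x_def by (rule not_prime_dvd_sum_cofactors[OF assms(1) _ j])
    moreover have "int (h j) dvd int n"
      using j \<open>\<forall>i\<in>I. h i \<in> ?P\<close> by (simp add: in_prime_factors_iff)
    ultimately show False
      using sum dvd_trans unfolding cong_0_iff by blast
  qed
  ultimately show ?thesis
    by blast
qed

lemma has_zero_sum_subseq_of_local_solutions:
  assumes "squarefree n" "p' \<in> prime_factors n" "I \<subseteq> {..<k}" "I \<noteq> {}"
    and "\<forall>p\<in>prime_factors n. \<forall>i\<in>I. \<not> int p dvd w p i"
    and "\<forall>i\<in>I. (\<Prod>q\<in>prime_factors n - {p'}. Legendre (w q i) (int q)) = 1"
    and "\<forall>p\<in>prime_factors n. [(\<Sum>i\<in>I. w p i * x i) = 0] (mod int p)"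
  shows "has_A_zero_sum_subseq n (Lset n p') k x"
proof -
  let ?P = "prime_factors n"
  have "\<forall>i. \<exists>a\<in>Zn n. \<forall>p\<in>?P. [a = w p i] (mod int p)"
    by (intro allI exists_Zn_cong_prime_factors[OF assms(1)])
  then obtain a where a: "\<forall>i. a i \<in> Zn n" "\<forall>i. \<forall>p\<in>?P. [a i = w p i] (mod int p)"
    by metis
  have "a i \<in> Lset n p'" if "i \<in> I" for i
  proof (rule Lset_memberI[OF assms(1,2) a(1)[rule_format]])
    show "\<forall>p\<in>?P. \<not> int p dvd a i"
      using a(2) assms(5) that cong_dvd_iff by blast
    show "(\<Prod>q\<in>?P - {p'}. Legendre (a i) (int q)) = 1"
      using a(2) assms(6) that Legendre_cong by (metis (no_types, lifting) DiffD1 prod.cong)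
  qed
  moreover have "[(\<Sum>i\<in>I. a i * x i) = 0] (mod int n)"
  proof (rule cong_squarefree_if_cong_prime_factors[OF assms(1)], intro ballI)
    fix p
    assume "p \<in> ?P"
    then have "[(\<Sum>i\<in>I. a i * x i) = (\<Sum>i\<in>I. w p i * x i)] (mod int p)"
      using a(2) by (intro cong_sum cong_mult cong_refl) auto
    then show "[(\<Sum>i\<in>I. a i * x i) = 0] (mod int p)"
      using assms(7) \<open>p \<in> ?P\<close> cong_trans by blast
  qed
  ultimately show ?thesis
    unfolding has_A_zero_sum_subseq_def using assms(3,4) by blast
qed

lemma has_zero_sum_subseq_Lset:
  assumes "squarefree n" "\<forall>p\<in>prime_factors n. 7 \<le> p" "p' \<in> prime_factors n" "bigOmega n \<noteq> 2"
  shows "has_A_zero_sum_subseq n (Lset n p') (bigOmega n + 1) x"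
proof -
  let ?P = "prime_factors n"
  have k: "bigOmega n = card ?P"
    by (rule bigOmega_squarefree[OF assms(1)])
  have primes: "\<forall>p\<in>?P. prime p"
    using in_prime_factors_imp_prime by blast
  have "card ?P \<noteq> 2"
    using assms(4) k by simp
  then obtain I e where I: "I \<subseteq> {..<bigOmega n + 1}" "I \<noteq> {}"
      and e: "\<forall>p\<in>?P. sign_compatible p x I (e p)" "\<forall>i. (\<Prod>q\<in>?P - {p'}. e q i) = 1"
    using exists_compatible_signs[OF finite_set_mset primes assms(3), of x] unfolding k by blast
  have "finite I"
    using I(1) finite_subset by blast
  have "\<forall>p\<in>?P. \<exists>w. (\<forall>i\<in>I. Legendre (w i) (int p) = e p i) \<and> [(\<Sum>i\<in>I. w i * x i) = 0] (mod int p)"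
    using exists_Legendre_zero_sum[OF _ _ \<open>finite I\<close>] e(1) assms(2) by (auto simp: in_prime_factors_iff)
  then obtain w where w: "\<forall>p\<in>?P. \<forall>i\<in>I. Legendre (w p i) (int p) = e p i"
      "\<forall>p\<in>?P. [(\<Sum>i\<in>I. w p i * x i) = 0] (mod int p)"
    by metis
  have "\<forall>p\<in>?P. \<forall>i\<in>I. \<not> int p dvd w p i"
  proof (intro ballI)
    fix p i
    assume "p \<in> ?P" "i \<in> I"
    moreover from this(1) have "e p i \<in> {-1, 1}"
      using e(1) by (simp add: sign_compatible_def)
    ultimately have "Legendre (w p i) (int p) \<noteq> 0"
      using w(1) by auto
    then show "\<not> int p dvd w p i"
      by (simp add: Legendre_eq_0_iff)
  qed
  moreover have "\<forall>i\<in>I. (\<Prod>q\<in>?P - {p'}. Legendre (w q i) (int q)) = 1"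
    using w(1) e(2) by simp
  ultimately show ?thesis
    using has_zero_sum_subseq_of_local_solutions[OF assms(1,3) I] w(2) by blast
qed

theorem theorem3p7:
  fixes n p' :: nat
  assumes "odd n"
    and "squarefree n"
    and "\<forall>p. prime p \<and> p dvd n \<longrightarrow> p \<ge> 7"
    and "bigOmega n \<noteq> 2"
    and "prime p'" and "p' dvd n"
  shows "DA (Lset n p') n = bigOmega n + 1"
proof (rule DA_eqI)
  have "n \<noteq> 0"
    using assms(2) by (cases "n = 0") simp_all
  then have "\<forall>p\<in>prime_factors n. 7 \<le> p" "p' \<in> prime_factors n"
    using assms(3,5,6) by (auto simp: in_prime_factors_iff)
  then show "\<forall>x. (\<forall>i<bigOmega n + 1. x i \<in> Zn n) \<longrightarrow> has_A_zero_sum_subseq n (Lset n p') (bigOmega n + 1) x"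
    using has_zero_sum_subseq_Lset[OF assms(2) _ _ assms(4)] by blast
next
  fix m
  assume "m < bigOmega n + 1"
  moreover have "Lset n p' \<subseteq> units_mod n"
    by (auto simp: Lset_def)
  ultimately show "\<exists>x. (\<forall>i<m. x i \<in> Zn n) \<and> \<not> has_A_zero_sum_subseq n (Lset n p') m x"
    using no_zero_sum_subseq_of_cofactors[OF assms(2)] by simp
qed

end
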